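(* If $(T,X)$ is a uniformly syndetically regularly stable compact flow ($T$ a Hausdorff topological group, $X$ compact Hausdorff), then $(T,X)$ is an a.p. flow.
   Context: $\mathscr U_X$ is the uniformity of $X$; for $A\subseteq T$ and $\delta\in\mathscr U_X$, $A\delta=\{(ax,ay):a\in A,(x,y)\in\delta\}$. $A\subseteq T$ is (right) syndetic if there is compact $K\subseteq T$ with $Kt\cap A\neq\emptyset$ for all $t$. $(T,X)$ is uniformly syndetically regularly stable if for every $\varepsilon\in\mathscr U_X$ there exist $\delta\in\mathscr U_X$ and a syndetic subsemigroup $A$ of $T$ with $A\delta\subseteq\varepsilon$. A flow is an a.p. flow if for every $\alpha\in\mathscr U_X$ there is a syndetic $A\subseteq T$ with $Ax\subseteq\alpha[x]$ for all $x\in X$. *)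

theory Defs
  imports "HOL-Analysis.Analysis"
begin

text \<open>The phase group T is a Hausdorff topological group, written additively
(not necessarily commutative): type class topological_group_add + t2_space.
The phase space X is a compact Hausdorff space (type with compact UNIV, t2_space).\<close>

definition flow :: "('g::topological_group_add \<Rightarrow> 'x::topological_space \<Rightarrow> 'x) \<Rightarrow> bool" where
  "flow act \<longleftrightarrow> continuous_on UNIV (\<lambda>p. act (fst p) (snd p))
     \<and> (\<forall>x. act 0 x = x) \<and> (\<forall>s t x. act (s + t) x = act s (act t x))"

text \<open>Uniformity of a compact Hausdorff space: the (unique) uniformity consists of all
neighbourhoods of the diagonal in X \<times> X.\<close>
definition entourage :: "('x::topological_space \<times> 'x) set \<Rightarrow> bool" where
  "entourage E \<longleftrightarrow> (\<exists>U. open U \<and> {(x, x) | x. True} \<subseteq> U \<and> U \<subseteq> E)"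

definition syndetic :: "'g::{topological_space, plus} set \<Rightarrow> bool" where
  "syndetic A \<longleftrightarrow> (\<exists>K. compact K \<and> (\<forall>t. ((\<lambda>k. k + t) ` K) \<inter> A \<noteq> {}))"

definition subsemigroup :: "'g::plus set \<Rightarrow> bool" where
  "subsemigroup A \<longleftrightarrow> (\<forall>a\<in>A. \<forall>b\<in>A. a + b \<in> A)"

definition act_rel :: "('g \<Rightarrow> 'x \<Rightarrow> 'x) \<Rightarrow> 'g set \<Rightarrow> ('x \<times> 'x) set \<Rightarrow> ('x \<times> 'x) set" where
  "act_rel act A \<delta> = {(act a x, act a y) | a x y. a \<in> A \<and> (x, y) \<in> \<delta>}"

definition unif_synd_reg_stable ::
  "('g::topological_group_add \<Rightarrow> 'x::topological_space \<Rightarrow> 'x) \<Rightarrow> bool" where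
  "unif_synd_reg_stable act \<longleftrightarrow>
     (\<forall>\<epsilon>. entourage \<epsilon> \<longrightarrow> (\<exists>\<delta> A. entourage \<delta> \<and> syndetic A \<and> subsemigroup A
        \<and> act_rel act A \<delta> \<subseteq> \<epsilon>))"

definition ap_flow :: "('g::topological_group_add \<Rightarrow> 'x::topological_space \<Rightarrow> 'x) \<Rightarrow> bool" where
  "ap_flow act \<longleftrightarrow>
     (\<forall>\<alpha>. entourage \<alpha> \<longrightarrow> (\<exists>A. syndetic A \<and> (\<forall>x. \<forall>a\<in>A. (x, act a x) \<in> \<alpha>)))"

end

theory Submission
  imports Defs
begin

text \<open>Fix an entourage \<alpha>. Stability gives a syndetic subsemigroup A whose elements all map a
  small entourage d into e. Recording each element of A on a finite d-net, rounded to a finite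
  e-net, sorts A into finitely many classes of uniformly close maps, so by the pigeonhole principle
  every element of A has a multiple uniformly close to the identity. A second application of
  stability shows that every s has a translate l + s, with l in a fixed compact set, uniformly
  close to one of finitely many elements t. Composing with fixed corrections of the finitely
  many t, obtained from such recurrent multiples and from the equicontinuity of the action on a
  compact set, shows that the return set of \<alpha> is syndetic.\<close>

lemma entourageI: "open U \<Longrightarrow> (\<And>x. (x, x) \<in> U) \<Longrightarrow> U \<subseteq> E \<Longrightarrow> entourage E"
  unfolding entourage_def by blast

lemma entourageE:
  assumes "entourage E"
  obtains U where "open U" and "\<And>x. (x, x) \<in> U" and "U \<subseteq> E"
  using assms unfolding entourage_def by blast

lemma entourage_refl: "entourage E \<Longrightarrow> (x, x) \<in> E"
  by (erule entourageE) blast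

lemma entourage_Int:
  assumes "entourage E" and "entourage F"
  shows "entourage (E \<inter> F)"
proof -
  obtain U where "open U" "\<And>x. (x, x) \<in> U" "U \<subseteq> E"
    using entourageE[OF assms(1)] by blast
  moreover obtain V where "open V" "\<And>x. (x, x) \<in> V" "V \<subseteq> F"
    using entourageE[OF assms(2)] by blast
  ultimately show ?thesis
    by (intro entourageI[of "U \<inter> V"]) auto
qed

lemma entourage_converse: "entourage E \<Longrightarrow> entourage (E\<inverse>)"
proof (erule entourageE)
  fix U
  assume U: "open U" "\<And>x. (x, x) \<in> U" "U \<subseteq> E"
  have "open (prod.swap -` U)"
    using U(1) continuous_on_swap by (rule open_vimage)
  moreover have "prod.swap -` U = U\<inverse>"
    by auto
  ultimately show "entourage (E\<inverse>)"
    using U by (intro entourageI[of "U\<inverse>"]) auto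
qed

lemma Hausdorff_space_euclidean_t2: "Hausdorff_space (euclidean :: 'x::t2_space topology)"
  unfolding Hausdorff_space_def disjnt_def by (metis hausdorff open_openin topspace_euclidean UNIV_I)

lemma entourage_half:
  fixes E :: "('x::t2_space \<times> 'x) set"
  assumes "compact (UNIV :: 'x set)" and "entourage E"
  obtains D where "entourage D" and "D O D \<subseteq> E"
proof -
  obtain U where U: "open U" "\<And>x. (x, x) \<in> U" "U \<subseteq> E"
    using entourageE[OF assms(2)] by blast
  have "\<exists>V W N. open V \<and> open W \<and> open N \<and> x \<in> W \<and> W \<inter> N = {} \<and> - V \<subseteq> N \<and> V \<times> V \<subseteq> U"
    for x
  proof -
    obtain A B where AB: "open A" "open B" "(x, x) \<in> A \<times> B" "A \<times> B \<subseteq> U"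
      by (rule open_prod_elim[OF U(1) U(2)])
    define V where "V = A \<inter> B"
    have "closed (- V)"
      unfolding V_def using AB(1,2) by (intro closed_Compl open_Int)
    then have "compact (- V)"
      using compact_Int_closed[OF assms(1)] by simp
    moreover have "disjnt {x} (- V)"
      using AB(3) by (simp add: V_def)
    ultimately obtain W N where "open W" "open N" "{x} \<subseteq> W" "- V \<subseteq> N" "disjnt W N"
      using Hausdorff_space_compact_separation[OF Hausdorff_space_euclidean_t2, of "{x}" "- V"]
      by (auto simp: compactin_euclidean_iff)
    then show ?thesis
      using AB by (intro exI[of _ V] exI[of _ W] exI[of _ N]) (auto simp: V_def disjnt_def)
  qed
  then obtain V W N where VWN: "\<And>x. open (V x) \<and> open (W x) \<and> open (N x) \<and> x \<in> W x \<and>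
      W x \<inter> N x = {} \<and> - V x \<subseteq> N x \<and> V x \<times> V x \<subseteq> U"
    by metis
  obtain F where F: "finite F" "UNIV \<subseteq> (\<Union>y\<in>F. W y)"
    using compactE_image[OF assms(1), of UNIV W] VWN by (metis UNIV_I UN_I subsetI)
  define D where "D = (\<Inter>y\<in>F. V y \<times> V y \<union> N y \<times> N y)"
  show thesis
  proof
    have "open D"
      unfolding D_def using F(1) VWN by (intro open_INT) (auto intro: open_Times)
    moreover have "(x, x) \<in> D" for x
      unfolding D_def using VWN by blast
    ultimately show "entourage D"
      by (rule entourageI) simp
    show "D O D \<subseteq> E"
    proof clarify
      fix a b c
      assume "(a, b) \<in> D" "(b, c) \<in> D"
      obtain y where "y \<in> F" "b \<in> W y"
        using F(2) by blast
      \<comment> \<open>b lies in W y, so it is not in N y, which forces a, b, c into V y\<close>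
      then have "(a, c) \<in> V y \<times> V y"
        using \<open>(a, b) \<in> D\<close> \<open>(b, c) \<in> D\<close> VWN[of y] unfolding D_def by blast
      then show "(a, c) \<in> E"
        using VWN U(3) by blast
    qed
  qed
qed

lemma entourage_symmetric_root4:
  fixes E :: "('x::t2_space \<times> 'x) set"
  assumes "compact (UNIV :: 'x set)" and "entourage E"
  obtains D where "entourage D" and "D\<inverse> = D" and "D O D O D O D \<subseteq> E"
proof -
  obtain D1 where D1: "entourage D1" "D1 O D1 \<subseteq> E"
    using entourage_half assms by blast
  obtain D2 where D2: "entourage D2" "D2 O D2 \<subseteq> D1"
    using entourage_half assms(1) D1(1) by blast
  show thesis
  proof
    show "entourage (D2 \<inter> D2\<inverse>)"
      using D2(1) by (intro entourage_Int entourage_converse)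
    show "(D2 \<inter> D2\<inverse>)\<inverse> = D2 \<inter> D2\<inverse>"
      by auto
    have "(D2 O D2) O (D2 O D2) \<subseteq> E"
      using D1(2) D2(2) relcomp_mono by blast
    then show "(D2 \<inter> D2\<inverse>) O (D2 \<inter> D2\<inverse>) O (D2 \<inter> D2\<inverse>) O (D2 \<inter> D2\<inverse>) \<subseteq> E"
      by blast
  qed
qed

lemma entourage_symmetric_root5:
  fixes E :: "('x::t2_space \<times> 'x) set"
  assumes "compact (UNIV :: 'x set)" and "entourage E"
  obtains D where "entourage D" and "D\<inverse> = D" and "(D O D O D O D) O D \<subseteq> E"
proof -
  obtain E' where E': "entourage E'" "E' O E' \<subseteq> E"
    by (rule entourage_half[OF assms])
  obtain D where D: "entourage D" "D\<inverse> = D" "D O D O D O D \<subseteq> E'"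
    by (rule entourage_symmetric_root4[OF assms(1) E'(1)])
  have "Id \<subseteq> D"
    using entourage_refl[OF D(1)] by auto
  then have "Id O Id O Id O D \<subseteq> D O D O D O D"
    by (intro relcomp_mono) auto
  then have "D \<subseteq> E'"
    using D(3) by simp
  then have "(D O D O D O D) O D \<subseteq> E' O E'"
    using D(3) by (intro relcomp_mono)
  then have "(D O D O D O D) O D \<subseteq> E"
    using E'(2) by (rule order_trans)
  with D(1,2) show thesis
    by (rule that)
qed

lemma entourage_finite_net:
  fixes E :: "('x::topological_space \<times> 'x) set"
  assumes "compact (UNIV :: 'x set)" and "entourage E"
  shows "\<exists>Y. finite Y \<and> (\<forall>x. \<exists>y\<in>Y. (x, y) \<in> E)"
proof -
  obtain U where U: "open U" "\<And>x. (x, x) \<in> U" "U \<subseteq> E"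
    using entourageE[OF assms(2)] by blast
  have "open ((\<lambda>x. (x, y)) -` U)" for y
    using U(1) by (rule open_vimage) (intro continuous_intros)
  moreover have "UNIV \<subseteq> (\<Union>y\<in>UNIV. (\<lambda>x. (x, y)) -` U)"
    using U(2) by blast
  ultimately obtain Y where Y: "finite Y" "UNIV \<subseteq> (\<Union>y\<in>Y. (\<lambda>x. (x, y)) -` U)"
    using compactE_image[OF assms(1)] by metis
  have "\<forall>x. \<exists>y\<in>Y. (x, y) \<in> E"
    using Y(2) U(3) by blast
  then show ?thesis
    using Y(1) by blast
qed

lemma flow_zero: "flow act \<Longrightarrow> act 0 x = x"
  unfolding flow_def by blast

lemma flow_add: "flow act \<Longrightarrow> act (s + t) x = act s (act t x)"
  unfolding flow_def by blast

lemma flow_minus: "flow act \<Longrightarrow> act s (act (- s) x) = x"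
  using flow_add[of act s "- s" x] flow_zero[of act x] by simp

lemma act_relI: "a \<in> A \<Longrightarrow> (x, y) \<in> D \<Longrightarrow> (act a x, act a y) \<in> act_rel act A D"
  unfolding act_rel_def by blast

lemma act_rel_subsetI:
  "(\<And>a x y. a \<in> A \<Longrightarrow> (x, y) \<in> D \<Longrightarrow> (act a x, act a y) \<in> E) \<Longrightarrow> act_rel act A D \<subseteq> E"
  unfolding act_rel_def by blast

lemma flow_equicontinuous_on_compact:
  fixes act :: "'g::topological_group_add \<Rightarrow> 'x::topological_space \<Rightarrow> 'x"
  assumes "flow act" and "compact K" and "entourage E"
  obtains D where "entourage D" and "act_rel act K D \<subseteq> E"
proof -
  obtain U where U: "open U" "\<And>x. (x, x) \<in> U" "U \<subseteq> E"
    using entourageE[OF assms(3)] by blast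
  have cont: "continuous_on UNIV (\<lambda>p. act (fst p) (snd p))"
    using assms(1) unfolding flow_def by blast
  define W where
    "W = (\<lambda>w. (act (snd w) (fst (fst w)), act (snd w) (snd (fst w)))) -` U"
  have "continuous_on UNIV (\<lambda>w::('x \<times> 'x) \<times> 'g. act (snd w) (fst (fst w)))"
    using continuous_on_compose2[OF cont, of UNIV "\<lambda>w. (snd w, fst (fst w))"]
    by (simp add: continuous_intros)
  moreover have "continuous_on UNIV (\<lambda>w::('x \<times> 'x) \<times> 'g. act (snd w) (snd (fst w)))"
    using continuous_on_compose2[OF cont, of UNIV "\<lambda>w. (snd w, snd (fst w))"]
    by (simp add: continuous_intros)
  ultimately have "open W"
    unfolding W_def using U(1) by (intro open_vimage continuous_on_Pair)
  then have "\<exists>N. (x, x) \<in> N \<and> open N \<and> N \<times> K \<subseteq> W" for x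
    using U(2) by (intro Elementary_Topology.tube_lemma[OF assms(2)]) (auto simp: W_def)
  then obtain N where N: "\<And>x. (x, x) \<in> N x \<and> open (N x) \<and> N x \<times> K \<subseteq> W"
    by metis
  show thesis
  proof
    show "entourage (\<Union>x. N x)"
      using N by (intro entourageI[of "\<Union>x. N x"]) auto
    show "act_rel act K (\<Union>x. N x) \<subseteq> E"
    proof (rule act_rel_subsetI)
      fix a p q
      assume "a \<in> K" "(p, q) \<in> (\<Union>x. N x)"
      then have "((p, q), a) \<in> W"
        using N by blast
      then show "(act a p, act a q) \<in> E"
        using U(3) unfolding W_def by auto
    qed
  qed
qed

text \<open>The map f records the values of a on a finite d-net, each rounded to a point of a finite
  e-net; it therefore takes finitely many values, and maps with equal records stay e-close to each
  other through four e-steps via the net.\<close>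
lemma finite_classification:
  fixes act :: "'g \<Rightarrow> 'x::topological_space \<Rightarrow> 'x"
  assumes "compact (UNIV :: 'x set)" and "entourage d" and "entourage e" and "e\<inverse> = e"
    and "act_rel act A d \<subseteq> e"
  obtains f :: "'g \<Rightarrow> 'x \<Rightarrow> 'x" where "finite (f ` A)"
    and "\<And>a b x. a \<in> A \<Longrightarrow> b \<in> A \<Longrightarrow> f a = f b \<Longrightarrow> (act a x, act b x) \<in> e O e O e O e"
proof -
  obtain Y where Y: "finite Y" "\<forall>x. \<exists>y\<in>Y. (x, y) \<in> d"
    using entourage_finite_net[OF assms(1,2)] by blast
  obtain Z where Z: "finite Z" "\<forall>x. \<exists>z\<in>Z. (x, z) \<in> e"
    using entourage_finite_net[OF assms(1,3)] by blast
  have e_sym: "(v, u) \<in> e" if "(u, v) \<in> e" for u v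
    using that assms(4) by (metis converse_iff)
  define pick where "pick a y = (SOME z. z \<in> Z \<and> (act a y, z) \<in> e)" for a y
  have pick: "pick a y \<in> Z \<and> (act a y, pick a y) \<in> e" for a y
  proof -
    have "\<exists>z. z \<in> Z \<and> (act a y, z) \<in> e"
      using Z(2) by blast
    then show ?thesis
      unfolding pick_def by (rule someI_ex)
  qed
  define f where "f a = restrict (pick a) Y" for a
  show thesis
  proof
    have "f ` A \<subseteq> Y \<rightarrow>\<^sub>E Z"
      using pick by (auto simp: f_def restrict_PiE_iff)
    then show "finite (f ` A)"
      using finite_PiE[OF Y(1) Z(1)] by (rule finite_subset)
    fix a b x
    assume ab: "a \<in> A" "b \<in> A" "f a = f b"
    obtain y where y: "y \<in> Y" "(x, y) \<in> d"
      using Y(2) by blast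
    have "pick a y = pick b y"
      using ab(3) y(1) unfolding f_def by (metis restrict_apply')
    then have "(pick a y, act b y) \<in> e"
      using pick e_sym by metis
    moreover have "(act a x, act a y) \<in> e"
      using assms(5) act_relI[OF ab(1) y(2)] by blast
    moreover have "(act a y, pick a y) \<in> e"
      using pick by blast
    moreover have "(act b y, act b x) \<in> e"
      using assms(5) act_relI[OF ab(2) y(2)] e_sym by blast
    ultimately show "(act a x, act b x) \<in> e O e O e O e"
      by blast
  qed
qed

fun multiple :: "nat \<Rightarrow> 'g::monoid_add \<Rightarrow> 'g" where
  "multiple 0 b = 0"
| "multiple (Suc n) b = multiple n b + b"

lemma multiple_add: "multiple (m + n) b = multiple m b + multiple n b"
  by (induction n) (simp_all add: add.assoc)

lemma multiple_in_subsemigroup: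
  assumes "subsemigroup A" and "b \<in> A" and "n \<ge> 1"
  shows "multiple n b \<in> A"
  using assms(3)
proof (induction n rule: dec_induct)
  case base
  then show ?case using assms(2) by simp
next
  case (step n)
  then show ?case using assms(1,2) by (simp add: subsemigroup_def)
qed

lemma multiple_act_rel:
  assumes "flow act" and "subsemigroup A" and "act_rel act A d \<subseteq> e" and "b \<in> A"
    and "(p, q) \<in> d \<inter> e"
  shows "(act (multiple n b) p, act (multiple n b) q) \<in> e"
proof (cases "n = 0")
  case True
  then show ?thesis
    using assms(5) by (simp add: flow_zero[OF assms(1)])
next
  case False
  then have "multiple n b \<in> A"
    using multiple_in_subsemigroup[OF assms(2,4)] by simp
  from act_relI[OF this, of p q d act] show ?thesis
    using assms(3,5) by blast
qed

text \<open>Pigeonhole: two multiples i < j of b fall into the same class, and translating by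
  - multiple i b turns the closeness of their actions into closeness of multiple (j - i) b to the
  identity.\<close>
lemma recurrence_of_multiples:
  fixes act :: "'g::topological_group_add \<Rightarrow> 'x::topological_space \<Rightarrow> 'x"
  assumes "flow act" and "subsemigroup A" and "finite (f ` A)"
    and "\<And>a b x. a \<in> A \<Longrightarrow> b \<in> A \<Longrightarrow> f a = f b \<Longrightarrow> (act a x, act b x) \<in> G"
    and "b \<in> A"
  shows "\<exists>m\<ge>1. \<forall>y. (y, act (multiple m b) y) \<in> G"
proof -
  have returns: "\<exists>m\<ge>1. \<forall>y. (y, act (multiple m b) y) \<in> G"
    if "1 \<le> i" "i < j" "f (multiple i b) = f (multiple j b)" for i j
  proof (intro exI conjI allI)
    show "1 \<le> j - i" using that by simp
    fix y
    define x where "x = act (- multiple i b) y"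
    have "(act (multiple i b) x, act (multiple j b) x) \<in> G"
      using assms(4) multiple_in_subsemigroup[OF assms(2,5)] that by simp
    moreover have "multiple j b = multiple (j - i) b + multiple i b"
      using multiple_add[of "j - i" i b] that(2) by simp
    ultimately show "(y, act (multiple (j - i) b) y) \<in> G"
      using flow_minus[OF assms(1)] flow_add[OF assms(1)] unfolding x_def by metis
  qed
  have "(\<lambda>n. f (multiple n b)) ` {1..} \<subseteq> f ` A"
    using multiple_in_subsemigroup[OF assms(2,5)] by auto
  then have "\<not> inj_on (\<lambda>n. f (multiple n b)) {1..}"
    using finite_imageD assms(3) finite_subset infinite_Ici by blast
  then obtain i j where "1 \<le> i" "1 \<le> j" "i \<noteq> j" "f (multiple i b) = f (multiple j b)"
    unfolding inj_on_def by auto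
  then show ?thesis
    using returns[of i j] returns[of j i] by (metis linorder_neqE_nat)
qed

lemma unif_synd_reg_stable_recurrent:
  fixes act :: "'g::topological_group_add \<Rightarrow> 'x::topological_space \<Rightarrow> 'x"
  assumes "compact (UNIV :: 'x set)" and "flow act" and "unif_synd_reg_stable act"
    and "entourage e" and "e\<inverse> = e"
  obtains d A where "entourage d" and "syndetic A" and "subsemigroup A"
    and "act_rel act A d \<subseteq> e"
    and "\<And>b. b \<in> A \<Longrightarrow> \<exists>m\<ge>1. \<forall>y. (y, act (multiple m b) y) \<in> e O e O e O e"
proof -
  obtain d A where dA: "entourage d" "syndetic A" "subsemigroup A" "act_rel act A d \<subseteq> e"
    using assms(3,4) unfolding unif_synd_reg_stable_def by blast
  obtain f :: "'g \<Rightarrow> 'x \<Rightarrow> 'x" where f: "finite (f ` A)"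
    and close: "\<And>a b x. a \<in> A \<Longrightarrow> b \<in> A \<Longrightarrow> f a = f b \<Longrightarrow> (act a x, act b x) \<in> e O e O e O e"
    using finite_classification[OF assms(1) dA(1) assms(4,5) dA(4)] by blast
  show thesis
    by (rule that[OF dA recurrence_of_multiples[OF assms(2) dA(3) f close]])
qed

lemma unif_synd_reg_stable_finite_approximation:
  fixes act :: "'g::topological_group_add \<Rightarrow> 'x::t2_space \<Rightarrow> 'x"
  assumes "compact (UNIV :: 'x set)" and "unif_synd_reg_stable act" and "entourage \<delta>"
  obtains F L where "finite F" and "compact L"
    and "\<And>s. \<exists>l\<in>L. \<exists>t\<in>F. \<forall>x. (act t x, act (l + s) x) \<in> \<delta>"
proof -
  obtain e where e: "entourage e" "e\<inverse> = e" "e O e O e O e \<subseteq> \<delta>"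
    by (rule entourage_symmetric_root4[OF assms(1,3)])
  obtain d A where dA: "entourage d" "syndetic A" "act_rel act A d \<subseteq> e"
    using assms(2) e(1) unfolding unif_synd_reg_stable_def by blast
  obtain f :: "'g \<Rightarrow> 'x \<Rightarrow> 'x" where f: "finite (f ` A)"
    and close4: "\<And>a b x. a \<in> A \<Longrightarrow> b \<in> A \<Longrightarrow> f a = f b \<Longrightarrow> (act a x, act b x) \<in> e O e O e O e"
    using finite_classification[OF assms(1) dA(1) e(1,2) dA(3)] by blast
  obtain L where L: "compact L" "\<forall>s. \<exists>l\<in>L. l + s \<in> A"
    using dA(2) unfolding syndetic_def by blast
  define pick where "pick v = (SOME t. t \<in> A \<and> f t = v)" for v
  have pick: "pick (f a) \<in> A \<and> f (pick (f a)) = f a" if "a \<in> A" for a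
  proof -
    have "\<exists>t. t \<in> A \<and> f t = f a"
      using that by blast
    then show ?thesis
      unfolding pick_def by (rule someI_ex)
  qed
  show thesis
  proof
    show "finite (pick ` f ` A)"
      using f by (rule finite_imageI)
    show "compact L"
      by (fact L(1))
    fix s
    obtain l where l: "l \<in> L" "l + s \<in> A"
      using L(2) by blast
    have "(act (pick (f (l + s))) x, act (l + s) x) \<in> \<delta>" for x
      using close4[OF _ l(2)] pick[OF l(2)] e(3) by blast
    then show "\<exists>l\<in>L. \<exists>t\<in>pick ` f ` A. \<forall>x. (act t x, act (l + s) x) \<in> \<delta>"
      using l by blast
  qed
qed

text \<open>For each t pick k \<in> K with k + t \<in> A and a return time m of k + t. Then
  c = multiple (m - 1) (k + t) + k satisfies c + t = multiple m (k + t), and the action of c, which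
  is that of k followed by a multiple of k + t, carries \<delta> into e; so c + l + s returns whenever
  l + s is \<delta>-close to t.\<close>
lemma syndetic_uniform_returns:
  fixes act :: "'g::topological_group_add \<Rightarrow> 'x::topological_space \<Rightarrow> 'x"
  assumes "flow act" and "subsemigroup A" and "act_rel act A d \<subseteq> e"
    and "\<And>b. b \<in> A \<Longrightarrow> \<exists>m\<ge>1. \<forall>y. (y, act (multiple m b) y) \<in> G"
    and "\<forall>s. \<exists>k\<in>K. k + s \<in> A" and "act_rel act K \<delta> \<subseteq> d \<inter> e"
    and "finite F" and "compact L" and "\<And>s. \<exists>l\<in>L. \<exists>t\<in>F. \<forall>x. (act t x, act (l + s) x) \<in> \<delta>"
    and "G O e \<subseteq> \<alpha>"
  shows "syndetic {b. \<forall>x. (x, act b x) \<in> \<alpha>}"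
proof -
  obtain k where k: "\<And>t. k t \<in> K" "\<And>t. k t + t \<in> A"
    using assms(5) by metis
  have "\<forall>t. \<exists>m\<ge>1. \<forall>y. (y, act (multiple m (k t + t)) y) \<in> G"
    using assms(4) k(2) by blast
  then obtain m where m: "\<And>t. m t \<ge> 1" "\<And>t y. (y, act (multiple (m t) (k t + t)) y) \<in> G"
    by metis
  define c where "c t = multiple (m t - 1) (k t + t) + k t" for t
  have c_return: "(y, act (c t + t) y) \<in> G" for t y
  proof -
    have "m t = Suc (m t - 1)"
      using m(1)[of t] by simp
    then have "multiple (m t) (k t + t) = c t + t"
      unfolding c_def by (metis add.assoc multiple.simps(2))
    then show ?thesis
      using m(2) by metis
  qed
  have c_close: "(act (c t) p, act (c t) q) \<in> e" if "(p, q) \<in> \<delta>" for t p q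
  proof -
    have "(act (k t) p, act (k t) q) \<in> d \<inter> e"
      using assms(6) act_relI[OF k(1) that] by blast
    from multiple_act_rel[OF assms(1-3) k(2) this] show ?thesis
      by (simp add: c_def flow_add[OF assms(1)])
  qed
  define L' where "L' = (\<Union>t\<in>F. (+) (c t) ` L)"
  have "compact L'"
    unfolding L'_def using assms(7,8)
    by (intro compact_UN compact_continuous_image continuous_intros) auto
  moreover have "\<exists>k\<in>L'. \<forall>x. (x, act (k + s) x) \<in> \<alpha>" for s
  proof -
    obtain l t where lt: "l \<in> L" "t \<in> F" "\<And>x. (act t x, act (l + s) x) \<in> \<delta>"
      using assms(9) by blast
    have "(x, act (c t + l + s) x) \<in> \<alpha>" for x
    proof -
      have "(x, act (c t) (act t x)) \<in> G"
        using c_return[of x t] by (simp add: flow_add[OF assms(1)])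
      moreover have "(act (c t) (act t x), act (c t + l + s) x) \<in> e"
        using c_close[OF lt(3)] by (simp add: flow_add[OF assms(1)])
      ultimately show ?thesis
        using assms(10) by blast
    qed
    moreover have "c t + l \<in> L'"
      unfolding L'_def using lt(1,2) by blast
    ultimately show ?thesis
      by blast
  qed
  ultimately show ?thesis
    unfolding syndetic_def by (intro exI[of _ L']) blast
qed

theorem corollary2:
  fixes act :: "'g::{topological_group_add, t2_space} \<Rightarrow> 'x::t2_space \<Rightarrow> 'x"
  assumes "compact (UNIV :: 'x set)"
    and "flow act"
    and "unif_synd_reg_stable act"
  shows "ap_flow act"
  unfolding ap_flow_def
proof (intro allI impI)
  fix \<alpha> :: "('x \<times> 'x) set"
  assume "entourage \<alpha>"
  then obtain e where e: "entourage e" "e\<inverse> = e" and e5: "(e O e O e O e) O e \<subseteq> \<alpha>"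
    by (rule entourage_symmetric_root5[OF assms(1)])
  obtain d A where dA: "entourage d" "syndetic A" "subsemigroup A" "act_rel act A d \<subseteq> e"
    and returns: "\<And>b. b \<in> A \<Longrightarrow> \<exists>m\<ge>1. \<forall>y. (y, act (multiple m b) y) \<in> e O e O e O e"
    using unif_synd_reg_stable_recurrent[OF assms e(1,2)] by blast
  obtain K where K: "compact K" "\<forall>s. \<exists>k\<in>K. k + s \<in> A"
    using dA(2) unfolding syndetic_def by blast
  obtain \<delta> where \<delta>: "entourage \<delta>" "act_rel act K \<delta> \<subseteq> d \<inter> e"
    by (rule flow_equicontinuous_on_compact[OF assms(2) K(1) entourage_Int[OF dA(1) e(1)]])
  obtain F L where "finite F" "compact L" "\<And>s. \<exists>l\<in>L. \<exists>t\<in>F. \<forall>x. (act t x, act (l + s) x) \<in> \<delta>"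
    using unif_synd_reg_stable_finite_approximation[OF assms(1,3) \<delta>(1)] by blast
  from syndetic_uniform_returns[OF assms(2) dA(3,4) returns K(2) \<delta>(2) this e5]
  show "\<exists>A. syndetic A \<and> (\<forall>x. \<forall>a\<in>A. (x, act a x) \<in> \<alpha>)"
    by (intro exI[of _ "{b. \<forall>x. (x, act b x) \<in> \<alpha>}"]) simp
qed

end
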